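(* Let $\mathcal{M}=(M,\mathcal{C})$ be a transitive $\beta$-model of MK$^*$. Let $N_1,N_2\in\mathcal{C}$ and let $R_1,R_2\in\mathcal{C}$ be well-founded binary relations such that $(N_1,R_1)$ and $(N_2,R_2)$ are coding pairs. If there is an isomorphism between $(N_1,R_1)$ and $(N_2,R_2)$, then there is such an isomorphism in $\mathcal{C}$.
   Context: MK$^*$ is Morse–Kelley class theory (two-sorted models $(M,\mathcal{C})$, $M$ a transitive ZFC model, $\mathcal{C}\subseteq\mathcal{P}(M)$, with set axioms, class Foundation and Extensionality, Replacement for class functions, Class Comprehension for all two-sorted formulas, Global Choice) plus Class-Bounding $\forall x\,\exists A\,\varphi(x,A)\to\exists B\,\forall x\,\exists y\,\varphi(x,(B)_y)$ with $(B)_y=\{z:(y,z)\in B\}$. A $\beta$-model: a class is well-founded in the model iff truly well-founded. A coding pair is $(M_0,R)$ with $M_0\in\mathcal{C}$ having a distinguished element $a$ and $R\in\mathcal{C}$ a binary relation on $M_0$ such that: each $z\in M_0$ has a unique $R$-distance $n$ from $a$ (an $R$-chain $zRz_{n-1}R\cdots Rz_1Ra$); if $y\neq z$, $yRx$, $zRx$ then $(M_0,R)\restriction y\not\cong(M_0,R)\restriction z$ (restriction = the element with everything $R$-chain-connected below it); if $y\neq z$ have equal $R$-distance from $a$ then $vRy\to\neg vRz$; $R$ is well-founded. An isomorphism of coding pairs is an isomorphism of the structures $(N_1,R_1)\cong(N_2,R_2)$. *)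

theory Defs
  imports Main
begin

(* The ambient universe V is HOL itself.  The set part M of the two-sorted model is
   a HOL set M :: 'a set together with a membership relation E (E x y means "x is an
   element of y").  A transitive model corresponds (via Mostowski collapse) to a
   well-founded extensional membership relation; classes are real subsets of M. *)

datatype form =
    SMem nat nat
  | SEq nat nat
  | CMem nat nat
  | CEq nat nat
  | Neg form
  | Conj form form
  | SEx nat form
  | CEx nat form

fun first_order :: "form \<Rightarrow> bool" where
  "first_order (SMem i j) = True"
| "first_order (SEq i j) = True"
| "first_order (CMem i j) = False"
| "first_order (CEq i j) = False"
| "first_order (Neg p) = first_order p"
| "first_order (Conj p q) = (first_order p \<and> first_order q)"
| "first_order (SEx n p) = first_order p"
| "first_order (CEx n p) = False"

fun sat :: "'a set \<Rightarrow> ('a \<Rightarrow> 'a \<Rightarrow> bool) \<Rightarrow> 'a set set \<Rightarrow> (nat \<Rightarrow> 'a) \<Rightarrow> (nat \<Rightarrow> 'a set) \<Rightarrow> form \<Rightarrow> bool" where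
  "sat M E C s S (SMem i j) = E (s i) (s j)"
| "sat M E C s S (SEq i j) = (s i = s j)"
| "sat M E C s S (CMem i j) = (s i \<in> S j)"
| "sat M E C s S (CEq i j) = (S i = S j)"
| "sat M E C s S (Neg p) = (\<not> sat M E C s S p)"
| "sat M E C s S (Conj p q) = (sat M E C s S p \<and> sat M E C s S q)"
| "sat M E C s S (SEx n p) = (\<exists>a\<in>M. sat M E C (s(n := a)) S p)"
| "sat M E C s S (CEx n p) = (\<exists>A\<in>C. sat M E C s (S(n := A)) p)"

(* Kuratowski ordered pair p = {{x},{x,y}} computed inside the model *)
definition opair :: "'a set \<Rightarrow> ('a \<Rightarrow> 'a \<Rightarrow> bool) \<Rightarrow> 'a \<Rightarrow> 'a \<Rightarrow> 'a \<Rightarrow> bool" where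
  "opair M E x y p \<longleftrightarrow> x \<in> M \<and> y \<in> M \<and> p \<in> M \<and>
     (\<forall>q\<in>M. E q p \<longleftrightarrow> ((\<forall>w\<in>M. E w q \<longleftrightarrow> w = x) \<or> (\<forall>w\<in>M. E w q \<longleftrightarrow> w = x \<or> w = y)))"

definition rel_of :: "'a set \<Rightarrow> ('a \<Rightarrow> 'a \<Rightarrow> bool) \<Rightarrow> 'a set \<Rightarrow> ('a \<times> 'a) set" where
  "rel_of M E R = {(x, y). x \<in> M \<and> y \<in> M \<and> (\<exists>p\<in>R. opair M E x y p)}"

definition slice :: "'a set \<Rightarrow> ('a \<Rightarrow> 'a \<Rightarrow> bool) \<Rightarrow> 'a set \<Rightarrow> 'a \<Rightarrow> 'a set" where
  "slice M E B y = {z \<in> M. \<exists>p\<in>B. opair M E y z p}"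

definition pair_class :: "'a set \<Rightarrow> ('a \<Rightarrow> 'a \<Rightarrow> bool) \<Rightarrow> 'a set \<Rightarrow> bool" where
  "pair_class M E F \<longleftrightarrow> (\<forall>p\<in>F. \<exists>x\<in>M. \<exists>y\<in>M. opair M E x y p)"

definition functional_class :: "'a set \<Rightarrow> ('a \<Rightarrow> 'a \<Rightarrow> bool) \<Rightarrow> 'a set \<Rightarrow> bool" where
  "functional_class M E F \<longleftrightarrow> pair_class M E F \<and>
     (\<forall>x y y' p p'. opair M E x y p \<and> p \<in> F \<and> opair M E x y' p' \<and> p' \<in> F \<longrightarrow> y = y')"

(* M is (isomorphic to) a transitive set: membership is truly well-founded
   (extensionality is part of the ZFC axioms below) *)
definition transitive_model :: "'a set \<Rightarrow> ('a \<Rightarrow> 'a \<Rightarrow> bool) \<Rightarrow> bool" where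
  "transitive_model M E \<longleftrightarrow> wf {(x, y). x \<in> M \<and> y \<in> M \<and> E x y}"

definition zfc_model :: "'a set \<Rightarrow> ('a \<Rightarrow> 'a \<Rightarrow> bool) \<Rightarrow> bool" where
  "zfc_model M E \<longleftrightarrow>
    \<comment> \<open>Extensionality\<close>
    (\<forall>x\<in>M. \<forall>y\<in>M. (\<forall>z\<in>M. E z x \<longleftrightarrow> E z y) \<longrightarrow> x = y) \<and>
    \<comment> \<open>Foundation\<close>
    (\<forall>x\<in>M. (\<exists>y\<in>M. E y x) \<longrightarrow> (\<exists>y\<in>M. E y x \<and> \<not> (\<exists>z\<in>M. E z y \<and> E z x))) \<and>
    \<comment> \<open>Pairing\<close>
    (\<forall>a\<in>M. \<forall>b\<in>M. \<exists>c\<in>M. E a c \<and> E b c) \<and>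
    \<comment> \<open>Union\<close>
    (\<forall>x\<in>M. \<exists>u\<in>M. \<forall>y\<in>M. E y x \<longrightarrow> (\<forall>z\<in>M. E z y \<longrightarrow> E z u)) \<and>
    \<comment> \<open>Power set\<close>
    (\<forall>x\<in>M. \<exists>p\<in>M. \<forall>y\<in>M. (\<forall>z\<in>M. E z y \<longrightarrow> E z x) \<longrightarrow> E y p) \<and>
    \<comment> \<open>Infinity\<close>
    (\<exists>i\<in>M. (\<exists>e\<in>M. E e i \<and> (\<forall>z\<in>M. \<not> E z e)) \<and>
       (\<forall>y\<in>M. E y i \<longrightarrow> (\<exists>t\<in>M. E t i \<and> (\<forall>z\<in>M. E z t \<longleftrightarrow> E z y \<or> z = y)))) \<and>
    \<comment> \<open>Separation scheme (first-order formulas, parameters from M)\<close>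
    (\<forall>\<phi> n s. first_order \<phi> \<longrightarrow> range s \<subseteq> M \<longrightarrow>
       (\<forall>a\<in>M. \<exists>b\<in>M. \<forall>z\<in>M. E z b \<longleftrightarrow> E z a \<and> sat M E {} (s(n := z)) (\<lambda>_. {}) \<phi>)) \<and>
    \<comment> \<open>Replacement scheme\<close>
    (\<forall>\<phi> n m s. first_order \<phi> \<longrightarrow> n \<noteq> m \<longrightarrow> range s \<subseteq> M \<longrightarrow>
       (\<forall>a\<in>M. (\<forall>x\<in>M. E x a \<longrightarrow> (\<exists>!y. y \<in> M \<and> sat M E {} (s(n := x, m := y)) (\<lambda>_. {}) \<phi>)) \<longrightarrow>
          (\<exists>b\<in>M. \<forall>y\<in>M. E y b \<longleftrightarrow> (\<exists>x\<in>M. E x a \<and> sat M E {} (s(n := x, m := y)) (\<lambda>_. {}) \<phi>)))) \<and>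
    \<comment> \<open>Choice (for families of pairwise disjoint nonempty sets)\<close>
    (\<forall>x\<in>M. (\<forall>y\<in>M. E y x \<longrightarrow> (\<exists>z\<in>M. E z y)) \<and>
       (\<forall>y\<in>M. \<forall>y'\<in>M. E y x \<and> E y' x \<and> y \<noteq> y' \<longrightarrow> \<not> (\<exists>z\<in>M. E z y \<and> E z y')) \<longrightarrow>
       (\<exists>c\<in>M. \<forall>y\<in>M. E y x \<longrightarrow> (\<exists>!z. z \<in> M \<and> E z y \<and> E z c)))"

(* (M, C) is a model of MK* (class Extensionality holds automatically since classes
   are genuine subsets of M) *)
definition mk_star :: "'a set \<Rightarrow> ('a \<Rightarrow> 'a \<Rightarrow> bool) \<Rightarrow> 'a set set \<Rightarrow> bool" where
  "mk_star M E C \<longleftrightarrow>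
    C \<subseteq> Pow M \<and>
    zfc_model M E \<and>
    \<comment> \<open>Class Foundation\<close>
    (\<forall>X\<in>C. X \<noteq> {} \<longrightarrow> (\<exists>y\<in>X. \<forall>z\<in>M. E z y \<longrightarrow> z \<notin> X)) \<and>
    \<comment> \<open>Replacement for class functions\<close>
    (\<forall>F\<in>C. functional_class M E F \<longrightarrow>
       (\<forall>a\<in>M. \<exists>b\<in>M. \<forall>y\<in>M. E y b \<longleftrightarrow> (\<exists>x\<in>M. E x a \<and> (\<exists>p\<in>F. opair M E x y p)))) \<and>
    \<comment> \<open>Class Comprehension for all two-sorted formulas (with set and class parameters)\<close>
    (\<forall>\<phi> n s S. range s \<subseteq> M \<longrightarrow> range S \<subseteq> C \<longrightarrow>
       {z \<in> M. sat M E C (s(n := z)) S \<phi>} \<in> C) \<and>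
    \<comment> \<open>Global Choice\<close>
    (\<exists>G\<in>C. functional_class M E G \<and>
       (\<forall>x\<in>M. (\<exists>y\<in>M. E y x) \<longrightarrow> (\<exists>y\<in>M. \<exists>p\<in>G. opair M E x y p \<and> E y x))) \<and>
    \<comment> \<open>Class-Bounding\<close>
    (\<forall>\<phi> n k s S. range s \<subseteq> M \<longrightarrow> range S \<subseteq> C \<longrightarrow>
       (\<forall>x\<in>M. \<exists>A\<in>C. sat M E C (s(n := x)) (S(k := A)) \<phi>) \<longrightarrow>
       (\<exists>B\<in>C. \<forall>x\<in>M. \<exists>y\<in>M. sat M E C (s(n := x)) (S(k := slice M E B y)) \<phi>))"

definition model_wf :: "'a set \<Rightarrow> ('a \<Rightarrow> 'a \<Rightarrow> bool) \<Rightarrow> 'a set set \<Rightarrow> 'a set \<Rightarrow> bool" where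
  "model_wf M E C R \<longleftrightarrow> (\<forall>X\<in>C. X \<noteq> {} \<longrightarrow> (\<exists>y\<in>X. \<forall>x\<in>X. (x, y) \<notin> rel_of M E R))"

definition beta_model :: "'a set \<Rightarrow> ('a \<Rightarrow> 'a \<Rightarrow> bool) \<Rightarrow> 'a set set \<Rightarrow> bool" where
  "beta_model M E C \<longleftrightarrow> (\<forall>R\<in>C. model_wf M E C R \<longleftrightarrow> wf (rel_of M E R))"

definition struct_iso :: "('a \<Rightarrow> 'a) \<Rightarrow> 'a set \<Rightarrow> ('a \<times> 'a) set \<Rightarrow> 'a set \<Rightarrow> ('a \<times> 'a) set \<Rightarrow> bool" where
  "struct_iso f A r B s \<longleftrightarrow> bij_betw f A B \<and> (\<forall>x\<in>A. \<forall>y\<in>A. (x, y) \<in> r \<longleftrightarrow> (f x, f y) \<in> s)"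

definition codes :: "'a set \<Rightarrow> ('a \<Rightarrow> 'a \<Rightarrow> bool) \<Rightarrow> 'a set \<Rightarrow> ('a \<Rightarrow> 'a) \<Rightarrow> 'a set \<Rightarrow> bool" where
  "codes M E F f A \<longleftrightarrow> F \<subseteq> M \<and> (\<forall>p\<in>M. p \<in> F \<longleftrightarrow> (\<exists>x\<in>A. opair M E x (f x) p))"

definition class_iso :: "'a set \<Rightarrow> ('a \<Rightarrow> 'a \<Rightarrow> bool) \<Rightarrow> 'a set set \<Rightarrow> 'a set \<Rightarrow> ('a \<times> 'a) set \<Rightarrow> 'a set \<Rightarrow> ('a \<times> 'a) set \<Rightarrow> bool" where
  "class_iso M E C A r B s \<longleftrightarrow> (\<exists>F\<in>C. \<exists>f. struct_iso f A r B s \<and> codes M E F f A)"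

definition restr :: "'a set \<Rightarrow> ('a \<times> 'a) set \<Rightarrow> 'a \<Rightarrow> 'a set" where
  "restr N r y = {x \<in> N. (x, y) \<in> r\<^sup>*}"

definition coding_pair :: "'a set \<Rightarrow> ('a \<Rightarrow> 'a \<Rightarrow> bool) \<Rightarrow> 'a set set \<Rightarrow> 'a set \<Rightarrow> 'a set \<Rightarrow> bool" where
  "coding_pair M E C N R \<longleftrightarrow>
    (let r = rel_of M E R in
     N \<in> C \<and> R \<in> C \<and>
     (\<forall>p\<in>R. \<exists>x\<in>N. \<exists>y\<in>N. opair M E x y p) \<and>
     (\<exists>a\<in>N.
        (\<forall>z\<in>N. \<exists>!n. (z, a) \<in> r ^^ n) \<and>
        (\<forall>x\<in>N. \<forall>y\<in>N. \<forall>z\<in>N. y \<noteq> z \<and> (y, x) \<in> r \<and> (z, x) \<in> r \<longrightarrow>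
            \<not> class_iso M E C (restr N r y) r (restr N r z) r) \<and>
        (\<forall>y\<in>N. \<forall>z\<in>N. y \<noteq> z \<and> (\<exists>n. (y, a) \<in> r ^^ n \<and> (z, a) \<in> r ^^ n) \<longrightarrow>
            (\<forall>v. (v, y) \<in> r \<longrightarrow> (v, z) \<notin> r)) \<and>
        model_wf M E C R))"

end

theory Submission
  imports Defs
begin

text \<open>By well-founded induction along \<open>R1\<close> one shows, for every \<open>x \<in> N1\<close> and \<open>y \<in> N2\<close>,
  that an isomorphism \<open>h\<close> between the restrictions \<open>(N1, R1)\<restriction>x\<close> and \<open>(N2, R2)\<restriction>y\<close> is
  unique and is coded by a class. The code of \<open>h\<close> is the class consisting of the pair \<open>(x, y)\<close>
  and of the members of all classes \<open>A\<close> coding an isomorphism from \<open>(N1, R1)\<restriction>u\<close> onto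
  \<open>(N2, R2)\<restriction>w\<close> for a child \<open>u\<close> of \<open>x\<close> and a child \<open>w\<close> of \<open>y\<close>. It exists by Class
  Comprehension, because ``\<open>A\<close> codes such an isomorphism'' becomes expressible once restrictions
  are described as root-closed sets. That this class codes exactly \<open>h\<close> is where the rigidity of
  the coding pair \<open>(N2, R2)\<close> enters: combining the code of \<open>h\<close> on \<open>(N1, R1)\<restriction>u\<close> with \<open>A\<close>
  yields a class isomorphism between the sibling restrictions at \<open>w\<close> and \<open>h u\<close>, so \<open>w = h u\<close>,
  and uniqueness below \<open>u\<close> makes the coded map agree with \<open>h\<close>.

  Well-foundedness of \<open>R1\<close> and \<open>R2\<close> is assumed outright.\<close>

section \<open>Isomorphisms between restrictions of rooted trees\<close>

lemma struct_iso_graph_iff: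
  "(\<exists>g. struct_iso g A r B s \<and> F = (\<lambda>x. (x, g x)) ` A) \<longleftrightarrow>
    single_valued F \<and> single_valued (F\<inverse>) \<and> Domain F = A \<and> Range F = B \<and>
    (\<forall>a b a' b'. (a, b) \<in> F \<and> (a', b') \<in> F \<longrightarrow> ((a, a') \<in> r \<longleftrightarrow> (b, b') \<in> s))"
    (is "?iso \<longleftrightarrow> ?graph")
proof
  assume ?iso
  then show ?graph
    by (auto simp: struct_iso_def bij_betw_def inj_on_def single_valued_def image_iff)
next
  assume graph: ?graph
  define g where "g x = (THE y. (x, y) \<in> F)" for x
  have g_eq: "g x = y" if "(x, y) \<in> F" for x y
    using graph that unfolding g_def single_valued_def by blast
  then have g: "(x, y) \<in> F \<longleftrightarrow> x \<in> A \<and> y = g x" for x y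
    using graph by blast
  then have "F = (\<lambda>x. (x, g x)) ` A" and "g ` A = B"
    using graph by auto
  moreover have "inj_on g A"
    using graph g unfolding single_valued_def by (auto intro: inj_onI)
  ultimately show ?iso
    using graph g by (auto simp: struct_iso_def bij_betw_def)
qed

lemma struct_iso_inv:
  assumes "struct_iso h A r B s"
  shows "struct_iso (inv_into A h) B s A r"
proof -
  have bij: "bij_betw h A B" and pres: "\<forall>x\<in>A. \<forall>y\<in>A. (x, y) \<in> r \<longleftrightarrow> (h x, h y) \<in> s"
    using assms by (auto simp: struct_iso_def)
  have "(x, y) \<in> s \<longleftrightarrow> (inv_into A h x, inv_into A h y) \<in> r" if "x \<in> B" "y \<in> B" for x y
    using pres bij_betw_inv_into_right[OF bij] bij_betw_apply[OF bij_betw_inv_into[OF bij]] that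
    by metis
  then show ?thesis
    using bij_betw_inv_into[OF bij] by (simp add: struct_iso_def)
qed

lemma struct_iso_comp:
  assumes "struct_iso g A r B s" "struct_iso h B s D q"
  shows "struct_iso (h \<circ> g) A r D q"
  using assms bij_betw_trans bij_betw_apply unfolding struct_iso_def by (metis comp_apply)

lemma struct_iso_restrict:
  assumes "struct_iso h A r B s" "A' \<subseteq> A"
  shows "struct_iso h A' r (h ` A') s"
  using assms unfolding struct_iso_def bij_betw_def by (auto intro: inj_on_subset)

lemma downward_closed_rtrancl:
  assumes "(t, t') \<in> r\<^sup>*" "t' \<in> A" "\<forall>q t. (q, t) \<in> r \<and> t \<in> A \<longrightarrow> q \<in> A"
  shows "t \<in> A"
  using assms by (induction rule: converse_rtrancl_induct) auto

lemma struct_iso_rtrancl: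
  assumes iso: "struct_iso h A r B s" and down: "\<forall>q t. (q, t) \<in> r \<and> t \<in> A \<longrightarrow> q \<in> A"
    and "(t, t') \<in> r\<^sup>*" "t' \<in> A"
  shows "(h t, h t') \<in> s\<^sup>*"
  using assms(3,4)
proof (induction rule: converse_rtrancl_induct)
  case (step y z)
  have z: "z \<in> A"
    using downward_closed_rtrancl[OF step(2) step(4) down] .
  then have "y \<in> A"
    using down step(1) by blast
  then have "(h y, h z) \<in> s"
    using iso step(1) z by (simp add: struct_iso_def)
  then show ?case
    using step(3,4) by (blast intro: converse_rtrancl_into_rtrancl)
qed simp

lemma struct_iso_rtrancl_iff:
  assumes iso: "struct_iso h A r B s"
    and downA: "\<forall>q t. (q, t) \<in> r \<and> t \<in> A \<longrightarrow> q \<in> A"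
    and downB: "\<forall>q t. (q, t) \<in> s \<and> t \<in> B \<longrightarrow> q \<in> B"
    and "t \<in> A" "t' \<in> A"
  shows "(h t, h t') \<in> s\<^sup>* \<longleftrightarrow> (t, t') \<in> r\<^sup>*"
proof
  have bij: "bij_betw h A B"
    using iso by (simp add: struct_iso_def)
  assume "(h t, h t') \<in> s\<^sup>*"
  with struct_iso_rtrancl[OF struct_iso_inv[OF iso] downB] have
    "(inv_into A h (h t), inv_into A h (h t')) \<in> r\<^sup>*"
    using bij_betw_apply[OF bij \<open>t' \<in> A\<close>] by blast
  then show "(t, t') \<in> r\<^sup>*"
    using bij assms(4,5) by (simp add: bij_betw_inv_into_left)
qed (rule struct_iso_rtrancl[OF iso downA _ \<open>t' \<in> A\<close>])

lemma restr_subset: "restr N r u \<subseteq> N"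
  by (auto simp: restr_def)

lemma restr_self: "u \<in> N \<Longrightarrow> u \<in> restr N r u"
  by (simp add: restr_def)

lemma restr_mono: "(u, x) \<in> r\<^sup>* \<Longrightarrow> restr N r u \<subseteq> restr N r x"
  by (auto simp: restr_def)

lemma restr_downward_closed:
  "r \<subseteq> N \<times> N \<Longrightarrow> \<forall>q t. (q, t) \<in> r \<and> t \<in> restr N r u \<longrightarrow> q \<in> restr N r u"
  by (auto simp: restr_def intro: converse_rtrancl_into_rtrancl)

lemma restr_within:
  "u \<in> restr N r x \<Longrightarrow> restr N r u = {t \<in> restr N r x. (t, u) \<in> r\<^sup>*}"
  by (auto simp: restr_def)

(* Unlike restr N r u, this is first-order in r; in a rooted tree the two agree. *)
definition root_closed :: "'a set \<Rightarrow> ('a \<times> 'a) set \<Rightarrow> 'a \<Rightarrow> 'a set \<Rightarrow> bool" where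
  "root_closed N r u D \<longleftrightarrow> D \<subseteq> N \<and> u \<in> D \<and> (\<forall>t\<in>D. t \<noteq> u \<longrightarrow> (\<exists>s\<in>D. (t, s) \<in> r)) \<and>
     (\<forall>q t. (q, t) \<in> r \<and> t \<in> D \<longrightarrow> q \<in> D)"

locale rooted_tree =
  fixes N :: "'a set" and r :: "('a \<times> 'a) set" and a :: 'a
  assumes rel_subset: "r \<subseteq> N \<times> N" and root: "a \<in> N"
    and unique_depth: "\<forall>z\<in>N. \<exists>!n. (z, a) \<in> r ^^ n"
    and wf: "wf r"
begin

lemma restr_root: "restr N r a = N"
  using unique_depth root by (auto simp: restr_def intro: relpow_imp_rtrancl)

lemma restr_child:
  assumes "t \<in> restr N r x" "t \<noteq> x"
  obtains u where "(u, x) \<in> r" "t \<in> restr N r u"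
proof -
  have "(t, x) \<in> r\<^sup>+"
    using assms by (auto simp: restr_def dest: rtranclD)
  then obtain u where "(t, u) \<in> r\<^sup>*" "(u, x) \<in> r"
    using tranclD2 by metis
  then show ?thesis
    using assms(1) that by (auto simp: restr_def)
qed

lemma root_closed_iff_restr:
  assumes "u \<in> N"
  shows "root_closed N r u D \<longleftrightarrow> D = restr N r u"
proof
  assume D: "root_closed N r u D"
  have DN: "D \<subseteq> N"
    using D by (simp add: root_closed_def)
  have "(t, u) \<in> r\<^sup>*" if "t \<in> D" "(t, a) \<in> r ^^ n" for t n
    using that
  \<comment> \<open>Climbing to a parent inside D lowers the depth, so the climb ends at u.\<close>
  proof (induction n arbitrary: t rule: less_induct)
    case (less n)
    show ?case
    proof (cases "t = u")
      case False
      then obtain s where s: "s \<in> D" "(t, s) \<in> r"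
        using D less.prems(1) by (auto simp: root_closed_def)
      obtain m where m: "(s, a) \<in> r ^^ m"
        using unique_depth DN s(1) by blast
      have "(t, a) \<in> r ^^ Suc m"
        using s(2) m by (rule relpow_Suc_I2)
      moreover have "\<exists>!n. (t, a) \<in> r ^^ n"
        using unique_depth DN less.prems(1) by blast
      ultimately have "n = Suc m"
        using less.prems(2) by blast
      then have "(s, u) \<in> r\<^sup>*"
        using less.IH[OF _ s(1) m] by simp
      with s(2) show ?thesis
        by (rule converse_rtrancl_into_rtrancl)
    qed simp
  qed
  note below = this
  have "D \<subseteq> restr N r u"
  proof
    fix t assume t: "t \<in> D"
    then obtain n where "(t, a) \<in> r ^^ n"
      using unique_depth DN by blast
    then show "t \<in> restr N r u"
      using below[OF t] t DN unfolding restr_def by blast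
  qed
  moreover have "restr N r u \<subseteq> D"
  proof
    fix t assume "t \<in> restr N r u"
    then show "t \<in> D"
      using D downward_closed_rtrancl[of t u r D] by (simp add: root_closed_def restr_def)
  qed
  ultimately show "D = restr N r u" ..
next
  assume D: "D = restr N r u"
  have "\<exists>s\<in>restr N r u. (t, s) \<in> r" if "t \<in> restr N r u" "t \<noteq> u" for t
  proof -
    have "(t, u) \<in> r\<^sup>+"
      using that by (auto simp: restr_def dest: rtranclD)
    then obtain s where "(t, s) \<in> r" "(s, u) \<in> r\<^sup>*"
      using tranclD by metis
    then show ?thesis
      using rel_subset unfolding restr_def by blast
  qed
  note parent = this
  show "root_closed N r u D"
    unfolding D root_closed_def
  proof (intro conjI)
    show "restr N r u \<subseteq> N"
      by (rule restr_subset)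
    show "u \<in> restr N r u"
      using assms by (rule restr_self)
  qed (use parent restr_downward_closed[OF rel_subset] in blast)+
qed

end

lemma restr_iso_root:
  assumes iso: "struct_iso h (restr N r x) r (restr N' r' y) r'"
    and "r \<subseteq> N \<times> N" "r' \<subseteq> N' \<times> N'" "acyclic r'" "x \<in> N" "y \<in> N'"
  shows "h x = y"
proof -
  have bij: "bij_betw h (restr N r x) (restr N' r' y)"
    using iso by (simp add: struct_iso_def)
  obtain t where t: "t \<in> restr N r x" "h t = y"
    using bij restr_self[OF assms(6)] by (metis bij_betw_iff_bijections)
  have x: "x \<in> restr N r x"
    using assms(5) by (rule restr_self)
  have "(t, x) \<in> r\<^sup>*"
    using t(1) by (simp add: restr_def)
  then have "(y, h x) \<in> r'\<^sup>*"
    using struct_iso_rtrancl_iff[OF iso restr_downward_closed[OF assms(2)]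
        restr_downward_closed[OF assms(3)] t(1) x] t(2) by simp
  moreover have "(h x, y) \<in> r'\<^sup>*"
    using bij_betw_apply[OF bij x] by (simp add: restr_def)
  ultimately show ?thesis
    using acyclic_impl_antisym_rtrancl[OF assms(4)] by (auto dest: antisymD)
qed

lemma restr_iso_image_restr:
  assumes iso: "struct_iso h (restr N r x) r (restr N' r' y) r'"
    and "r \<subseteq> N \<times> N" "r' \<subseteq> N' \<times> N'" "u \<in> restr N r x"
  shows "h ` restr N r u = restr N' r' (h u)"
proof -
  have bij: "bij_betw h (restr N r x) (restr N' r' y)"
    using iso by (simp add: struct_iso_def)
  have hu: "h u \<in> restr N' r' y"
    using bij_betw_apply[OF bij assms(4)] .
  have rt: "(h t, h u) \<in> r'\<^sup>* \<longleftrightarrow> (t, u) \<in> r\<^sup>*" if "t \<in> restr N r x" for t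
    using struct_iso_rtrancl_iff[OF iso restr_downward_closed[OF assms(2)]
        restr_downward_closed[OF assms(3)] that assms(4)] .
  have img: "h ` restr N r x = restr N' r' y"
    using bij by (simp add: bij_betw_def)
  show ?thesis
    unfolding restr_within[OF assms(4)] restr_within[OF hu]
  proof (intro equalityI subsetI)
    fix t' assume t': "t' \<in> {t' \<in> restr N' r' y. (t', h u) \<in> r'\<^sup>*}"
    then obtain t where "t \<in> restr N r x" "t' = h t"
      using img by auto
    then show "t' \<in> h ` {t \<in> restr N r x. (t, u) \<in> r\<^sup>*}"
      using t' rt by auto
  qed (use img rt in auto)
qed

lemma restr_iso_child:
  assumes iso: "struct_iso h (restr N r x) r (restr N' r' y) r'"
    and "r \<subseteq> N \<times> N" "r' \<subseteq> N' \<times> N'" "acyclic r'" "x \<in> N" "y \<in> N'" "(u, x) \<in> r"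
  shows "(h u, y) \<in> r'" "struct_iso h (restr N r u) r (restr N' r' (h u)) r'"
proof -
  have x: "x \<in> restr N r x"
    using assms(5) by (rule restr_self)
  have u: "u \<in> restr N r x"
    using restr_downward_closed[OF assms(2)] assms(7) x by blast
  show "(h u, y) \<in> r'"
    using iso u x assms(7) restr_iso_root[OF iso assms(2-6)] by (simp add: struct_iso_def)
  have "restr N r u \<subseteq> restr N r x"
    using assms(7) by (intro restr_mono) auto
  then show "struct_iso h (restr N r u) r (restr N' r' (h u)) r'"
    using struct_iso_restrict[OF iso] restr_iso_image_restr[OF iso assms(2,3) u] by metis
qed

lemma graph_converse_relcomp:
  assumes "bij_betw g D B"
  shows "((\<lambda>x. (x, g x)) ` D)\<inverse> O (\<lambda>x. (x, g' x)) ` D = (\<lambda>b. (b, (g' \<circ> inv_into D g) b)) ` B"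
  using assms by (auto simp: bij_betw_def image_iff inv_into_f_f)

section \<open>Formulas describing coded relations\<close>

definition Or :: "form \<Rightarrow> form \<Rightarrow> form" where "Or p q = Neg (Conj (Neg p) (Neg q))"
definition Imp :: "form \<Rightarrow> form \<Rightarrow> form" where "Imp p q = Neg (Conj p (Neg q))"
definition Iff :: "form \<Rightarrow> form \<Rightarrow> form" where "Iff p q = Conj (Imp p q) (Imp q p)"
definition SAll :: "nat \<Rightarrow> form \<Rightarrow> form" where "SAll n p = Neg (SEx n (Neg p))"

lemma sat_Or_Imp_Iff_SAll [simp]:
  "sat M E C s S (Or p q) \<longleftrightarrow> sat M E C s S p \<or> sat M E C s S q"
  "sat M E C s S (Imp p q) \<longleftrightarrow> (sat M E C s S p \<longrightarrow> sat M E C s S q)"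
  "sat M E C s S (Iff p q) \<longleftrightarrow> (sat M E C s S p \<longleftrightarrow> sat M E C s S q)"
  "sat M E C s S (SAll n p) \<longleftrightarrow> (\<forall>a\<in>M. sat M E C (s(n := a)) S p)"
  by (auto simp: Or_def Imp_def Iff_def SAll_def)

(* Set variables 18-21 are bound inside these encodings, so their arguments must be below 18. *)
definition opair_form :: "nat \<Rightarrow> nat \<Rightarrow> nat \<Rightarrow> form" where
  "opair_form i j k = SAll 20 (Iff (SMem 20 k) (Or (SAll 21 (Iff (SMem 21 20) (SEq 21 i)))
     (SAll 21 (Iff (SMem 21 20) (Or (SEq 21 i) (SEq 21 j))))))"

lemma sat_opair_form [simp]:
  assumes "i < 20" "j < 20" "k < 20" "s i \<in> M" "s j \<in> M" "s k \<in> M"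
  shows "sat M E C s S (opair_form i j k) \<longleftrightarrow> opair M E (s i) (s j) (s k)"
  using assms by (auto simp: opair_form_def opair_def)

definition rel_form :: "nat \<Rightarrow> nat \<Rightarrow> nat \<Rightarrow> form" where
  "rel_form R i j = SEx 19 (Conj (CMem 19 R) (opair_form i j 19))"

lemma sat_rel_form [simp]:
  assumes "i < 19" "j < 19" "s i \<in> M" "s j \<in> M"
  shows "sat M E C s S (rel_form R i j) \<longleftrightarrow> (s i, s j) \<in> rel_of M E (S R)"
  using assms by (auto simp: rel_form_def rel_of_def opair_def)

lemma opair_in_M: "opair M E x y p \<Longrightarrow> x \<in> M \<and> y \<in> M \<and> p \<in> M"
  by (simp add: opair_def)

lemma rel_of_in_M: "(x, y) \<in> rel_of M E A \<Longrightarrow> x \<in> M \<and> y \<in> M"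
  by (simp add: rel_of_def)

definition dom_form :: "nat \<Rightarrow> nat \<Rightarrow> form" where
  "dom_form A i = SEx 18 (rel_form A i 18)"

definition ran_form :: "nat \<Rightarrow> nat \<Rightarrow> form" where
  "ran_form A i = SEx 18 (rel_form A 18 i)"

lemma sat_dom_form [simp]:
  "i < 18 \<Longrightarrow> s i \<in> M \<Longrightarrow> sat M E C s S (dom_form A i) \<longleftrightarrow> s i \<in> Domain (rel_of M E (S A))"
  by (auto simp: dom_form_def dest: rel_of_in_M)

lemma sat_ran_form [simp]:
  "i < 18 \<Longrightarrow> s i \<in> M \<Longrightarrow> sat M E C s S (ran_form A i) \<longleftrightarrow> s i \<in> Range (rel_of M E (S A))"
  by (auto simp: ran_form_def dest: rel_of_in_M)

definition root_closed_form :: "(nat \<Rightarrow> form) \<Rightarrow> nat \<Rightarrow> nat \<Rightarrow> nat \<Rightarrow> form" where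
  "root_closed_form D N R u =
    Conj (SAll 5 (Imp (D 5) (CMem 5 N)))
   (Conj (D u)
   (Conj (SAll 5 (Imp (Conj (D 5) (Neg (SEq 5 u))) (SEx 6 (Conj (D 6) (rel_form R 5 6)))))
         (SAll 5 (SAll 6 (Imp (Conj (rel_form R 5 6) (D 6)) (D 5))))))"

lemma sat_root_closed_form:
  assumes D: "\<And>s' i. i < 18 \<Longrightarrow> s' i \<in> M \<Longrightarrow> sat M E C s' S (D i) \<longleftrightarrow> s' i \<in> X"
    and "X \<subseteq> M" "u < 5" "s u \<in> M"
  shows "sat M E C s S (root_closed_form D N R u) \<longleftrightarrow> root_closed (S N) (rel_of M E (S R)) (s u) X"
  using assms unfolding root_closed_form_def root_closed_def
  by (simp add: D) (blast dest: rel_of_in_M)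

definition pair_class_form :: "nat \<Rightarrow> form" where
  "pair_class_form A = SAll 10 (Imp (CMem 10 A) (SEx 5 (SEx 6 (opair_form 5 6 10))))"

definition single_valued_form :: "nat \<Rightarrow> form" where
  "single_valued_form A = SAll 5 (SAll 6 (SAll 7 (Imp (Conj (rel_form A 5 6) (rel_form A 5 7)) (SEq 6 7))))"

definition injective_form :: "nat \<Rightarrow> form" where
  "injective_form A = SAll 5 (SAll 6 (SAll 7 (Imp (Conj (rel_form A 5 7) (rel_form A 6 7)) (SEq 5 6))))"

definition preserves_form :: "nat \<Rightarrow> nat \<Rightarrow> nat \<Rightarrow> form" where
  "preserves_form A R R' = SAll 5 (SAll 6 (SAll 7 (SAll 8 (Imp (Conj (rel_form A 5 6) (rel_form A 7 8))
     (Iff (rel_form R 5 7) (rel_form R' 6 8))))))"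

lemma sat_pair_class_form [simp]:
  "S A \<subseteq> M \<Longrightarrow> sat M E C s S (pair_class_form A) \<longleftrightarrow> pair_class M E (S A)"
  by (auto simp: pair_class_form_def pair_class_def)

lemma sat_single_valued_form [simp]:
  "sat M E C s S (single_valued_form A) \<longleftrightarrow> single_valued (rel_of M E (S A))"
  by (auto simp: single_valued_form_def single_valued_def dest: rel_of_in_M)

lemma sat_injective_form [simp]:
  "sat M E C s S (injective_form A) \<longleftrightarrow> single_valued ((rel_of M E (S A))\<inverse>)"
  by (auto simp: injective_form_def single_valued_def dest: rel_of_in_M)

lemma sat_preserves_form [simp]:
  "sat M E C s S (preserves_form A R R') \<longleftrightarrow>
    (\<forall>a b a' b'. (a, b) \<in> rel_of M E (S A) \<and> (a', b') \<in> rel_of M E (S A) \<longrightarrow>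
       ((a, a') \<in> rel_of M E (S R) \<longleftrightarrow> (b, b') \<in> rel_of M E (S R')))"
  unfolding preserves_form_def by simp (blast dest: rel_of_in_M)

(* "A codes an isomorphism from restr N r u onto restr N' r' w", with the two restrictions
   replaced by root-closed sets so that it is expressible by a formula (restr_iso_code_iff). *)
definition restr_iso_code :: "'a set \<Rightarrow> ('a \<Rightarrow> 'a \<Rightarrow> bool) \<Rightarrow> 'a set \<Rightarrow> ('a \<times> 'a) set \<Rightarrow>
    'a set \<Rightarrow> ('a \<times> 'a) set \<Rightarrow> 'a set \<Rightarrow> 'a \<Rightarrow> 'a \<Rightarrow> bool" where
  "restr_iso_code M E N r N' r' A u w \<longleftrightarrow> (let F = rel_of M E A in
     pair_class M E A \<and> single_valued F \<and> single_valued (F\<inverse>) \<and>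
     root_closed N r u (Domain F) \<and> root_closed N' r' w (Range F) \<and>
     (\<forall>a b a' b'. (a, b) \<in> F \<and> (a', b') \<in> F \<longrightarrow> ((a, a') \<in> r \<longleftrightarrow> (b, b') \<in> r')))"

definition restr_iso_form :: form where
  "restr_iso_form =
    Conj (pair_class_form 4) (Conj (single_valued_form 4) (Conj (injective_form 4)
   (Conj (root_closed_form (dom_form 4) 0 1 3) (Conj (root_closed_form (ran_form 4) 2 3 4)
         (preserves_form 4 1 3)))))"

lemma sat_restr_iso_form:
  assumes "s 3 \<in> M" "s 4 \<in> M" "S 4 \<subseteq> M"
  shows "sat M E C s S restr_iso_form \<longleftrightarrow>
    restr_iso_code M E (S 0) (rel_of M E (S 1)) (S 2) (rel_of M E (S 3)) (S 4) (s 3) (s 4)"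
proof -
  have "sat M E C s S (root_closed_form (dom_form 4) 0 1 3) \<longleftrightarrow>
      root_closed (S 0) (rel_of M E (S 1)) (s 3) (Domain (rel_of M E (S 4)))"
    by (rule sat_root_closed_form) (use assms in \<open>auto dest: rel_of_in_M\<close>)
  moreover have "sat M E C s S (root_closed_form (ran_form 4) 2 3 4) \<longleftrightarrow>
      root_closed (S 2) (rel_of M E (S 3)) (s 4) (Range (rel_of M E (S 4)))"
    by (rule sat_root_closed_form) (use assms in \<open>auto dest: rel_of_in_M\<close>)
  ultimately show ?thesis
    using assms by (simp add: restr_iso_form_def restr_iso_code_def Let_def)
qed

definition converse_comp_form :: form where
  "converse_comp_form = SEx 5 (SEx 6 (SEx 7
     (Conj (opair_form 6 7 0) (Conj (rel_form 0 5 6) (rel_form 1 5 7)))))"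

definition restr_iso_extension_form :: form where
  "restr_iso_extension_form = Or (opair_form 1 2 0)
     (SEx 3 (Conj (rel_form 1 3 1) (SEx 4 (Conj (rel_form 3 4 2)
       (CEx 4 (Conj (CMem 0 4) restr_iso_form))))))"

section \<open>Ordered pairs and coded relations in a model of MK*\<close>

definition code_of :: "'a set \<Rightarrow> ('a \<Rightarrow> 'a \<Rightarrow> bool) \<Rightarrow> ('a \<times> 'a) set \<Rightarrow> 'a set" where
  "code_of M E Q = {p \<in> M. \<exists>x y. (x, y) \<in> Q \<and> opair M E x y p}"

lemma codes_iff_code_of: "codes M E A g D \<longleftrightarrow> A = code_of M E ((\<lambda>x. (x, g x)) ` D)"
  unfolding codes_def code_of_def by blast

lemma pair_class_code_of: "pair_class M E (code_of M E Q)"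
  by (auto simp: pair_class_def code_of_def opair_def)

locale mk_model =
  fixes M :: "'a set" and E :: "'a \<Rightarrow> 'a \<Rightarrow> bool" and C :: "'a set set"
  assumes mk_star: "mk_star M E C"
begin

lemma class_subset: "X \<in> C \<Longrightarrow> X \<subseteq> M"
  using mk_star by (auto simp: mk_star_def)

lemma comprehension: "range s \<subseteq> M \<Longrightarrow> range S \<subseteq> C \<Longrightarrow> {z \<in> M. sat M E C (s(n := z)) S \<phi>} \<in> C"
  using mk_star unfolding mk_star_def by blast

lemma zfc_model: "zfc_model M E"
  using mk_star by (simp add: mk_star_def)

lemma extensionality: "x \<in> M \<Longrightarrow> y \<in> M \<Longrightarrow> (\<And>z. z \<in> M \<Longrightarrow> E z x \<longleftrightarrow> E z y) \<Longrightarrow> x = y"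
  using zfc_model[unfolded zfc_model_def, THEN conjunct1] by blast

lemma doubleton_ex:
  assumes "x \<in> M" "y \<in> M"
  shows "\<exists>d\<in>M. \<forall>z\<in>M. E z d \<longleftrightarrow> z = x \<or> z = y"
proof -
  note zfc = zfc_model[unfolded zfc_model_def]
  obtain c where c: "c \<in> M" "E x c" "E y c"
    using zfc[THEN conjunct2, THEN conjunct2, THEN conjunct1] assms by blast
  have separation: "first_order \<phi> \<Longrightarrow> range s \<subseteq> M \<Longrightarrow>
       \<forall>a\<in>M. \<exists>b\<in>M. \<forall>z\<in>M. E z b \<longleftrightarrow> E z a \<and> sat M E {} (s(n := z)) (\<lambda>_. {}) \<phi>" for \<phi> n s
    using zfc[THEN conjunct2, THEN conjunct2, THEN conjunct2, THEN conjunct2, THEN conjunct2,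
        THEN conjunct2, THEN conjunct1] by blast
  have "range ((\<lambda>_. x)(2 := y)) \<subseteq> M"
    using assms by auto
  from separation[OF _ this, of "Or (SEq 0 1) (SEq 0 2)" 0] c(1)
  obtain b where "b \<in> M" "\<forall>z\<in>M. E z b \<longleftrightarrow> E z c \<and> (z = x \<or> z = y)"
    by (auto simp: Or_def)
  then show ?thesis
    using c by blast
qed

lemma opair_ex:
  assumes "x \<in> M" "y \<in> M"
  shows "\<exists>p. opair M E x y p"
proof -
  obtain sx where sx: "sx \<in> M" "\<forall>z\<in>M. E z sx \<longleftrightarrow> z = x"
    using doubleton_ex[OF assms(1) assms(1)] by auto
  obtain dx where dx: "dx \<in> M" "\<forall>z\<in>M. E z dx \<longleftrightarrow> z = x \<or> z = y"
    using doubleton_ex[OF assms] by auto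
  obtain p where p: "p \<in> M" "\<forall>z\<in>M. E z p \<longleftrightarrow> z = sx \<or> z = dx"
    using doubleton_ex[OF sx(1) dx(1)] by auto
  have "q = sx \<longleftrightarrow> (\<forall>w\<in>M. E w q \<longleftrightarrow> w = x)" "q = dx \<longleftrightarrow> (\<forall>w\<in>M. E w q \<longleftrightarrow> w = x \<or> w = y)"
    if "q \<in> M" for q
    using extensionality[OF that sx(1)] extensionality[OF that dx(1)] sx dx by auto
  then show ?thesis
    using assms p unfolding opair_def by blast
qed

lemma opair_unique: "opair M E x y p \<Longrightarrow> opair M E x y p' \<Longrightarrow> p = p'"
  unfolding opair_def by (intro extensionality) simp_all

lemma opair_members:
  assumes "opair M E x y p"
  shows "(\<lambda>q. {z \<in> M. E z q}) ` {q \<in> M. E q p} = {{x}, {x, y}}" (is "?mem ` _ = _")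
proof -
  have xy: "x \<in> M" "y \<in> M"
    using assms by (auto simp: opair_def)
  have members: "E q p \<longleftrightarrow> ?mem q = {x} \<or> ?mem q = {x, y}" if "q \<in> M" for q
  proof -
    have "(\<forall>w\<in>M. E w q \<longleftrightarrow> w = x) \<longleftrightarrow> ?mem q = {x}"
      "(\<forall>w\<in>M. E w q \<longleftrightarrow> w = x \<or> w = y) \<longleftrightarrow> ?mem q = {x, y}"
      using xy by blast+
    then show ?thesis
      using assms that by (simp add: opair_def)
  qed
  have "\<exists>q\<in>M. ?mem q = {x, b}" if b: "b \<in> M" for b
  proof -
    obtain q where "q \<in> M" "\<forall>z\<in>M. E z q \<longleftrightarrow> z = x \<or> z = b"
      using doubleton_ex[OF xy(1) b] by blast
    then show ?thesis
      using xy b by blast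
  qed
  then obtain sx dx where "sx \<in> M" "?mem sx = {x}" "dx \<in> M" "?mem dx = {x, y}"
    using xy by (metis insert_absorb2)
  then show ?thesis
    using members by auto
qed

lemma opair_inject:
  assumes "opair M E x y p" "opair M E x' y' p"
  shows "x = x' \<and> y = y'"
proof -
  have "{{x}, {x, y}} = {{x'}, {x', y'}}"
    using opair_members[OF assms(1)] opair_members[OF assms(2)] by simp
  then show ?thesis
    by (auto simp: doubleton_eq_iff insert_eq_iff)
qed

lemma model_nonempty: "M \<noteq> {}"
  using zfc_model[unfolded zfc_model_def, THEN conjunct2, THEN conjunct2, THEN conjunct2,
      THEN conjunct2, THEN conjunct2, THEN conjunct1] by blast

lemma rel_of_code_of: "rel_of M E (code_of M E Q) = Q \<inter> M \<times> M"
proof (intro equalityI subsetI)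
  fix z assume "z \<in> rel_of M E (code_of M E Q)"
  then obtain x y x' y' p where z: "z = (x, y)" and p: "opair M E x y p" "(x', y') \<in> Q" "opair M E x' y' p"
    unfolding rel_of_def code_of_def by blast
  then have "x = x'" "y = y'"
    using opair_inject[OF p(1) p(3)] by simp_all
  then show "z \<in> Q \<inter> M \<times> M"
    using z p opair_in_M[OF p(1)] by simp
next
  fix z assume z: "z \<in> Q \<inter> M \<times> M"
  then obtain x y p where xy: "z = (x, y)" and p: "opair M E x y p"
    using opair_ex by blast
  then show "z \<in> rel_of M E (code_of M E Q)"
    using z opair_in_M[OF p] unfolding rel_of_def code_of_def by blast
qed

lemma code_of_rel_of:
  assumes "A \<subseteq> M" "pair_class M E A"
  shows "code_of M E (rel_of M E A) = A"
proof (intro equalityI subsetI)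
  fix p assume "p \<in> code_of M E (rel_of M E A)"
  then obtain x y q where p: "opair M E x y p" and q: "q \<in> A" "opair M E x y q"
    unfolding code_of_def rel_of_def by blast
  then show "p \<in> A"
    using opair_unique[OF p q(2)] by simp
next
  fix p assume p: "p \<in> A"
  then obtain x y where xy: "opair M E x y p"
    using assms(2) unfolding pair_class_def by blast
  then show "p \<in> code_of M E (rel_of M E A)"
    using p opair_in_M[OF xy] unfolding code_of_def rel_of_def by blast
qed

lemma rel_of_subset:
  assumes "\<forall>p\<in>R. \<exists>x\<in>N. \<exists>y\<in>N. opair M E x y p"
  shows "rel_of M E R \<subseteq> N \<times> N"
proof
  fix z assume "z \<in> rel_of M E R"
  then obtain x y p where z: "z = (x, y)" and p: "p \<in> R" "opair M E x y p"
    unfolding rel_of_def by blast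
  moreover obtain x' y' where "x' \<in> N" "y' \<in> N" and p': "opair M E x' y' p"
    using assms p(1) by blast
  ultimately show "z \<in> N \<times> N"
    using opair_inject[OF p(2) p'] by simp
qed

lemma converse_relcomp_class:
  assumes "A \<in> C" "A' \<in> C"
  shows "code_of M E ((rel_of M E A)\<inverse> O rel_of M E A') \<in> C"
proof -
  obtain m where "m \<in> M"
    using model_nonempty by blast
  then have "{p \<in> M. sat M E C ((\<lambda>_. m)(0 := p)) ((\<lambda>_. A)(1 := A')) converse_comp_form} \<in> C"
    using assms by (intro comprehension) auto
  moreover have "{p \<in> M. sat M E C ((\<lambda>_. m)(0 := p)) ((\<lambda>_. A)(1 := A')) converse_comp_form} =
      code_of M E ((rel_of M E A)\<inverse> O rel_of M E A')"
    unfolding converse_comp_form_def code_of_def by (auto; blast dest: rel_of_in_M)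
  ultimately show ?thesis
    by simp
qed

lemma restr_iso_extension_class:
  assumes "N \<in> C" "R \<in> C" "N' \<in> C" "R' \<in> C" "x \<in> M" "y \<in> M"
  shows "{p \<in> M. opair M E x y p \<or> (\<exists>u w. (u, x) \<in> rel_of M E R \<and> (w, y) \<in> rel_of M E R' \<and>
      (\<exists>A\<in>C. p \<in> A \<and> restr_iso_code M E N (rel_of M E R) N' (rel_of M E R') A u w))} \<in> C"
proof -
  let ?s = "(\<lambda>_. x)(2 := y)" and ?S = "(\<lambda>_. N)(1 := R, 2 := N', 3 := R')"
  have "{p \<in> M. sat M E C (?s(0 := p)) ?S restr_iso_extension_form} \<in> C"
    using assms by (intro comprehension) auto
  moreover have "sat M E C ((?s(0 := p))(3 := u, 4 := w)) (?S(4 := A)) restr_iso_form \<longleftrightarrow>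
      restr_iso_code M E N (rel_of M E R) N' (rel_of M E R') A u w"
    if "u \<in> M" "w \<in> M" "A \<in> C" for p u w A
    using that class_subset by (subst sat_restr_iso_form) auto
  ultimately show ?thesis
    using assms unfolding restr_iso_extension_form_def
    by (elim back_subst[of "\<lambda>X. X \<in> C"]) (auto; blast dest: rel_of_in_M)
qed

lemma codes_iff_rel_of:
  assumes "A \<subseteq> M" "D \<subseteq> M" "g ` D \<subseteq> M"
  shows "codes M E A g D \<longleftrightarrow> pair_class M E A \<and> rel_of M E A = (\<lambda>x. (x, g x)) ` D"
proof
  assume "codes M E A g D"
  then have "A = code_of M E ((\<lambda>x. (x, g x)) ` D)"
    by (simp add: codes_iff_code_of)
  then show "pair_class M E A \<and> rel_of M E A = (\<lambda>x. (x, g x)) ` D"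
    using assms(2,3) by (auto simp: pair_class_code_of rel_of_code_of)
next
  assume "pair_class M E A \<and> rel_of M E A = (\<lambda>x. (x, g x)) ` D"
  then show "codes M E A g D"
    using code_of_rel_of[OF assms(1)] by (simp add: codes_iff_code_of)
qed

lemma class_iso_from_common_domain:
  assumes "class_iso M E C D r B s" "class_iso M E C D r B' s'" "D \<subseteq> M" "B \<subseteq> M" "B' \<subseteq> M"
  shows "class_iso M E C B s B' s'"
proof -
  obtain A g where A: "A \<in> C" "struct_iso g D r B s" "codes M E A g D"
    using assms(1) by (auto simp: class_iso_def)
  obtain A' g' where A': "A' \<in> C" "struct_iso g' D r B' s'" "codes M E A' g' D"
    using assms(2) by (auto simp: class_iso_def)
  have bij: "bij_betw g D B" "bij_betw g' D B'"
    using A(2) A'(2) by (simp_all add: struct_iso_def)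
  have "rel_of M E A = (\<lambda>x. (x, g x)) ` D" "rel_of M E A' = (\<lambda>x. (x, g' x)) ` D"
    using A(1,3) A'(1,3) assms(3-5) bij codes_iff_rel_of class_subset by (auto simp: bij_betw_def)
  then have "codes M E (code_of M E ((rel_of M E A)\<inverse> O rel_of M E A')) (g' \<circ> inv_into D g) B"
    by (simp add: codes_iff_code_of graph_converse_relcomp[OF bij(1)])
  moreover have "struct_iso (g' \<circ> inv_into D g) B s B' s'"
    using struct_iso_comp[OF struct_iso_inv[OF A(2)] A'(2)] .
  ultimately show ?thesis
    using converse_relcomp_class[OF A(1) A'(1)] by (auto simp: class_iso_def)
qed

lemma coding_pair_rooted_tree:
  assumes "coding_pair M E C N R" "wf (rel_of M E R)"
  obtains a where "rooted_tree N (rel_of M E R) a"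
proof -
  have "rel_of M E R \<subseteq> N \<times> N"
    using assms(1) rel_of_subset by (simp add: coding_pair_def Let_def)
  with assms that show ?thesis
    unfolding coding_pair_def Let_def rooted_tree_def by blast
qed

end

section \<open>Coded isomorphisms between coding pairs\<close>

locale coding_pair_iso =
  mk_model M E C + t1: rooted_tree N1 "rel_of M E R1" a1 + t2: rooted_tree N2 "rel_of M E R2" a2
  for M :: "'a set" and E C N1 R1 a1 N2 R2 a2 +
  assumes classes: "N1 \<in> C" "R1 \<in> C" "N2 \<in> C" "R2 \<in> C"
    and siblings_not_class_iso: "\<forall>x\<in>N2. \<forall>y\<in>N2. \<forall>z\<in>N2.
      y \<noteq> z \<and> (y, x) \<in> rel_of M E R2 \<and> (z, x) \<in> rel_of M E R2 \<longrightarrow>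
      \<not> class_iso M E C (restr N2 (rel_of M E R2) y) (rel_of M E R2) (restr N2 (rel_of M E R2) z) (rel_of M E R2)"
begin

abbreviation "r1 \<equiv> rel_of M E R1"
abbreviation "r2 \<equiv> rel_of M E R2"

abbreviation restr_iso :: "('a \<Rightarrow> 'a) \<Rightarrow> 'a \<Rightarrow> 'a \<Rightarrow> bool" where
  "restr_iso h x y \<equiv> struct_iso h (restr N1 r1 x) r1 (restr N2 r2 y) r2"

lemma restr_subset_model: "restr N1 r1 x \<subseteq> M" "restr N2 r2 y \<subseteq> M"
  by (rule order_trans[OF restr_subset class_subset], fact classes)+

lemma restr_iso_at_child:
  assumes "restr_iso h x y" "x \<in> N1" "y \<in> N2" "(u, x) \<in> r1"
  shows "u \<in> N1" "h u \<in> N2" "(h u, y) \<in> r2" "restr_iso h u (h u)"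
proof -
  note child = restr_iso_child[OF assms(1) t1.rel_subset t2.rel_subset wf_acyclic[OF t2.wf] assms(2-4)]
  show "(h u, y) \<in> r2" "restr_iso h u (h u)"
    by (fact child)+
  show "u \<in> N1" "h u \<in> N2"
    using assms(4) child(1) t1.rel_subset t2.rel_subset by auto
qed

lemma restr_iso_code_iff:
  assumes "A \<in> C" "u \<in> N1" "w \<in> N2"
  shows "restr_iso_code M E N1 r1 N2 r2 A u w \<longleftrightarrow>
    (\<exists>g. restr_iso g u w \<and> codes M E A g (restr N1 r1 u))"
proof -
  let ?F = "rel_of M E A" and ?graph = "\<lambda>g. (\<lambda>x. (x, g x)) ` restr N1 r1 u"
  have "restr_iso_code M E N1 r1 N2 r2 A u w \<longleftrightarrow> pair_class M E A \<and>
      (single_valued ?F \<and> single_valued (?F\<inverse>) \<and> Domain ?F = restr N1 r1 u \<and>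
       Range ?F = restr N2 r2 w \<and>
       (\<forall>a b a' b'. (a, b) \<in> ?F \<and> (a', b') \<in> ?F \<longrightarrow> ((a, a') \<in> r1 \<longleftrightarrow> (b, b') \<in> r2)))"
    using t1.root_closed_iff_restr[OF assms(2)] t2.root_closed_iff_restr[OF assms(3)]
    by (simp add: restr_iso_code_def Let_def)
  also have "\<dots> \<longleftrightarrow> pair_class M E A \<and> (\<exists>g. restr_iso g u w \<and> ?F = ?graph g)"
    by (simp only: struct_iso_graph_iff)
  also have "\<dots> \<longleftrightarrow> (\<exists>g. restr_iso g u w \<and> codes M E A g (restr N1 r1 u))"
  proof -
    have "codes M E A g (restr N1 r1 u) \<longleftrightarrow> pair_class M E A \<and> ?F = ?graph g"
      if "restr_iso g u w" for g
      using that assms(1) class_subset restr_subset_model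
      by (intro codes_iff_rel_of) (auto simp: struct_iso_def bij_betw_def)
    then show ?thesis
      by blast
  qed
  finally show ?thesis .
qed

(* Uniqueness and codability are proved together: rigidity can only be applied to class
   isomorphisms, so uniqueness at x needs the codes below x. *)
definition coded_unique :: "'a \<Rightarrow> bool" where
  "coded_unique x \<longleftrightarrow> (\<forall>y\<in>N2. \<forall>h. restr_iso h x y \<longrightarrow>
     (\<exists>A\<in>C. codes M E A h (restr N1 r1 x)) \<and>
     (\<forall>h'. restr_iso h' x y \<longrightarrow> (\<forall>t\<in>restr N1 r1 x. h' t = h t)))"

lemma child_code_agrees:
  assumes IH: "coded_unique u" and h: "restr_iso h x y" and xy: "x \<in> N1" "y \<in> N2"
    and ux: "(u, x) \<in> r1" and g: "restr_iso g u w" and wy: "(w, y) \<in> r2"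
    and A: "A \<in> C" "codes M E A g (restr N1 r1 u)"
  shows "w = h u" and "\<forall>t\<in>restr N1 r1 u. g t = h t"
proof -
  note hu = restr_iso_at_child[OF h xy ux]
  obtain A' where "A' \<in> C" "codes M E A' h (restr N1 r1 u)"
    using IH hu(2,4) unfolding coded_unique_def by blast
  then have "class_iso M E C (restr N1 r1 u) r1 (restr N2 r2 (h u)) r2"
    using hu(4) unfolding class_iso_def by blast
  moreover have "class_iso M E C (restr N1 r1 u) r1 (restr N2 r2 w) r2"
    using A g unfolding class_iso_def by blast
  ultimately have "class_iso M E C (restr N2 r2 w) r2 (restr N2 r2 (h u)) r2"
    using class_iso_from_common_domain restr_subset_model by blast
  moreover have "w \<in> N2"
    using wy t2.rel_subset by blast
  ultimately show "w = h u"
    using siblings_not_class_iso xy(2) hu(2,3) wy by blast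
  with g have "restr_iso g u (h u)"
    by simp
  then show "\<forall>t\<in>restr N1 r1 u. g t = h t"
    using IH hu(2,4) unfolding coded_unique_def by blast
qed

lemma restr_iso_root_eq: "restr_iso h x y \<Longrightarrow> x \<in> N1 \<Longrightarrow> y \<in> N2 \<Longrightarrow> h x = y"
  using restr_iso_root[OF _ t1.rel_subset t2.rel_subset wf_acyclic[OF t2.wf]] .

lemma restr_iso_unique_step:
  assumes IH: "\<And>u. (u, x) \<in> r1 \<Longrightarrow> coded_unique u" and xy: "x \<in> N1" "y \<in> N2"
    and h: "restr_iso h x y" and h': "restr_iso h' x y" and t: "t \<in> restr N1 r1 x"
  shows "h' t = h t"
proof (cases "t = x")
  case True
  then show ?thesis
    using restr_iso_root_eq[OF h xy] restr_iso_root_eq[OF h' xy] by simp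
next
  case False
  then obtain u where u: "(u, x) \<in> r1" "t \<in> restr N1 r1 u"
    using t1.restr_child[OF t] by blast
  note hu' = restr_iso_at_child[OF h' xy u(1)]
  obtain A where "A \<in> C" "codes M E A h' (restr N1 r1 u)"
    using IH[OF u(1)] hu'(2,4) unfolding coded_unique_def by blast
  then have "\<forall>t\<in>restr N1 r1 u. h' t = h t"
    using child_code_agrees(2)[OF IH[OF u(1)] h xy u(1) hu'(4) hu'(3)] by blast
  then show ?thesis
    using u(2) by blast
qed

(* The code of an isomorphism restr N1 r1 x \<cong> restr N2 r2 y, assembled from the codes of the
   isomorphisms between child restrictions; its definition quantifies over classes, so its
   existence needs MK rather than GB. *)
definition iso_code_below :: "'a \<Rightarrow> 'a \<Rightarrow> 'a set" where
  "iso_code_below x y = {p \<in> M. opair M E x y p \<or> (\<exists>u w. (u, x) \<in> r1 \<and> (w, y) \<in> r2 \<and>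
     (\<exists>A\<in>C. p \<in> A \<and> restr_iso_code M E N1 r1 N2 r2 A u w))}"

lemma iso_code_below_class:
  assumes "x \<in> N1" "y \<in> N2"
  shows "iso_code_below x y \<in> C"
proof -
  have "x \<in> M" "y \<in> M"
    using assms class_subset[OF classes(1)] class_subset[OF classes(3)] by auto
  then show ?thesis
    unfolding iso_code_below_def by (rule restr_iso_extension_class[OF classes])
qed

lemma graph_code_in_iso_code_below:
  assumes IH: "\<And>u. (u, x) \<in> r1 \<Longrightarrow> coded_unique u" and xy: "x \<in> N1" "y \<in> N2"
    and h: "restr_iso h x y" and t: "t \<in> restr N1 r1 x" and p: "opair M E t (h t) p"
  shows "p \<in> iso_code_below x y"
proof (cases "t = x")
  case True
  then show ?thesis
    using p restr_iso_root_eq[OF h xy] opair_in_M[OF p] by (simp add: iso_code_below_def)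
next
  case False
  then obtain u where u: "(u, x) \<in> r1" "t \<in> restr N1 r1 u"
    using t1.restr_child[OF t] by blast
  note hu = restr_iso_at_child[OF h xy u(1)]
  obtain A where A: "A \<in> C" "codes M E A h (restr N1 r1 u)"
    using IH[OF u(1)] hu(2,4) unfolding coded_unique_def by blast
  then have "restr_iso_code M E N1 r1 N2 r2 A u (h u)"
    using restr_iso_code_iff[OF A(1) hu(1,2)] hu(4) by blast
  moreover have pM: "p \<in> M"
    using opair_in_M[OF p] by simp
  moreover have "p \<in> A"
    using A(2) u(2) p pM unfolding codes_def by blast
  ultimately show ?thesis
    using u(1) hu(3) A(1) unfolding iso_code_below_def by blast
qed

lemma iso_code_below_in_graph_code:
  assumes IH: "\<And>u. (u, x) \<in> r1 \<Longrightarrow> coded_unique u" and xy: "x \<in> N1" "y \<in> N2"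
    and h: "restr_iso h x y" and p: "p \<in> iso_code_below x y"
  shows "\<exists>t\<in>restr N1 r1 x. opair M E t (h t) p"
proof -
  consider "opair M E x y p"
    | u w A where "(u, x) \<in> r1" "(w, y) \<in> r2" "A \<in> C" "p \<in> A"
        "restr_iso_code M E N1 r1 N2 r2 A u w"
    using p unfolding iso_code_below_def by blast
  then show ?thesis
  proof cases
    case 1
    then show ?thesis
      using restr_iso_root_eq[OF h xy] restr_self[OF xy(1)] by metis
  next
    case (2 u w A)
    have "u \<in> N1" "w \<in> N2"
      using 2(1,2) t1.rel_subset t2.rel_subset by blast+
    then obtain g where g: "restr_iso g u w" "codes M E A g (restr N1 r1 u)"
      using restr_iso_code_iff[OF 2(3)] 2(5) by blast
    have "\<forall>t\<in>restr N1 r1 u. g t = h t"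
      using child_code_agrees(2)[OF IH[OF 2(1)] h xy 2(1) g(1) 2(2) 2(3) g(2)] .
    moreover obtain t where "t \<in> restr N1 r1 u" "opair M E t (g t) p"
      using g(2) 2(4) p unfolding codes_def iso_code_below_def by blast
    moreover have "restr N1 r1 u \<subseteq> restr N1 r1 x"
      using 2(1) by (intro restr_mono) auto
    ultimately show ?thesis
      by auto
  qed
qed

lemma restr_iso_coded_step:
  assumes IH: "\<And>u. (u, x) \<in> r1 \<Longrightarrow> coded_unique u" and xy: "x \<in> N1" "y \<in> N2"
    and h: "restr_iso h x y"
  shows "codes M E (iso_code_below x y) h (restr N1 r1 x)"
  unfolding codes_def
proof (intro conjI ballI iffI)
  show "iso_code_below x y \<subseteq> M"
    by (auto simp: iso_code_below_def)
qed (use graph_code_in_iso_code_below[OF IH xy h] iso_code_below_in_graph_code[OF IH xy h] in blast)+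

lemma coded_unique: "x \<in> N1 \<Longrightarrow> coded_unique x"
proof (induction x rule: wf_induct_rule[OF t1.wf])
  case (1 x)
  have IH: "coded_unique u" if "(u, x) \<in> r1" for u
    using 1 that t1.rel_subset by blast
  show ?case
    unfolding coded_unique_def
  proof (intro ballI allI impI conjI)
    fix y h assume y: "y \<in> N2" and h: "restr_iso h x y"
    show "\<exists>A\<in>C. codes M E A h (restr N1 r1 x)"
      using iso_code_below_class[OF 1(2) y] restr_iso_coded_step[OF IH 1(2) y h] ..
    show "h' t = h t" if "restr_iso h' x y" "t \<in> restr N1 r1 x" for h' t
      using restr_iso_unique_step[OF IH 1(2) y h that] .
  qed
qed

end

theorem lemma9:
  fixes M :: "'a set" and E :: "'a \<Rightarrow> 'a \<Rightarrow> bool" and C :: "'a set set"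
    and N1 N2 R1 R2 :: "'a set"
  assumes "transitive_model M E"
    and "mk_star M E C"
    and "beta_model M E C"
    and "N1 \<in> C" and "N2 \<in> C" and "R1 \<in> C" and "R2 \<in> C"
    and "wf (rel_of M E R1)" and "wf (rel_of M E R2)"
    and "coding_pair M E C N1 R1" and "coding_pair M E C N2 R2"
    and "\<exists>f. struct_iso f N1 (rel_of M E R1) N2 (rel_of M E R2)"
  shows "class_iso M E C N1 (rel_of M E R1) N2 (rel_of M E R2)"
proof -
  interpret mk_model M E C
    using assms(2) by unfold_locales
  obtain a1 where a1: "rooted_tree N1 (rel_of M E R1) a1"
    using coding_pair_rooted_tree[OF assms(10,8)] .
  obtain a2 where a2: "rooted_tree N2 (rel_of M E R2) a2"
    using coding_pair_rooted_tree[OF assms(11,9)] .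
  have "\<forall>x\<in>N2. \<forall>y\<in>N2. \<forall>z\<in>N2. y \<noteq> z \<and> (y, x) \<in> rel_of M E R2 \<and> (z, x) \<in> rel_of M E R2 \<longrightarrow>
      \<not> class_iso M E C (restr N2 (rel_of M E R2) y) (rel_of M E R2) (restr N2 (rel_of M E R2) z) (rel_of M E R2)"
    using assms(11) unfolding coding_pair_def Let_def by blast
  with assms(2,4-7) a1 a2 interpret coding_pair_iso M E C N1 R1 a1 N2 R2 a2
    by (simp add: coding_pair_iso_def coding_pair_iso_axioms_def mk_model_def)
  obtain f where f: "restr_iso f a1 a2"
    using assms(12) unfolding t1.restr_root t2.restr_root ..
  then obtain A where "A \<in> C" "codes M E A f (restr N1 r1 a1)"
    using coded_unique[OF t1.root] t2.root unfolding coded_unique_def by blast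
  then show ?thesis
    using f unfolding class_iso_def t1.restr_root t2.restr_root by blast
qed

end
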